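(* Let $X$ be a $3$-dimensional Minkowski space whose closed unit ball has a $2$-dimensional face which is an $n$-gon. Then $m(X)\geq n+1$.
   Context: A Minkowski space is a finite-dimensional real normed space $(X,\|\cdot\|)$. For a set $S\subseteq X$, its midpoint set is $M(S)=\{\tfrac12(x+y): x,y\in S,\ x\neq y\}$. A set $S\subseteq X$ is an M-set if every vector in $M(S)$ has norm exactly $1$ and every vector in $S$ has norm strictly greater than $1$. $m(X)$ denotes the largest cardinality of an M-set in $X$ if such a largest finite cardinality exists, and $m(X)=\infty$ otherwise. *)

theory Defs
  imports "HOL-Analysis.Analysis" "HOL-Library.Extended_Nat"
begin

text \<open>A 3-dimensional Minkowski space is modelled (up to linear isometry) as the
  real vector space real^3 equipped with an arbitrary norm N.\<close>

definition is_norm :: "('a::real_vector \<Rightarrow> real) \<Rightarrow> bool" where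
  "is_norm N \<longleftrightarrow>
     (\<forall>x. N x = 0 \<longleftrightarrow> x = 0) \<and>
     (\<forall>c x. N (c *\<^sub>R x) = \<bar>c\<bar> * N x) \<and>
     (\<forall>x y. N (x + y) \<le> N x + N y)"

definition unit_ball_N :: "('a::real_vector \<Rightarrow> real) \<Rightarrow> 'a set" where
  "unit_ball_N N = {x. N x \<le> 1}"

definition midpoint_set :: "'a::real_vector set \<Rightarrow> 'a set" where
  "midpoint_set S = {(1/2) *\<^sub>R (x + y) | x y. x \<in> S \<and> y \<in> S \<and> x \<noteq> y}"

definition M_set :: "('a::real_vector \<Rightarrow> real) \<Rightarrow> 'a set \<Rightarrow> bool" where
  "M_set N S \<longleftrightarrow> (\<forall>z \<in> midpoint_set S. N z = 1) \<and> (\<forall>x \<in> S. N x > 1)"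

text \<open>m(X): the largest cardinality of an M-set, or \<infinity> if there is none
  (the supremum over finite M-sets; an infinite M-set has arbitrarily large finite
  M-subsets, so this agrees with the paper's definition).\<close>

definition m_num :: "('a::real_vector \<Rightarrow> real) \<Rightarrow> enat" where
  "m_num N = (SUP S \<in> {S. M_set N S \<and> finite S}. enat (card S))"

definition is_ngon :: "'a::euclidean_space set \<Rightarrow> nat \<Rightarrow> bool" where
  "is_ngon F n \<longleftrightarrow> polytope F \<and> aff_dim F = 2 \<and> card {v. v extreme_point_of F} = n"

end

theory Submission
  imports Defs
begin

(* Pick a point p_C in the relative interior of every
   edge C of F; there are at least n edges, and the midpoint of two such points lies in the
   relative interior of F.  By Helly's theorem in the plane there is a centre c such that
   (3c - p_C)/2 lies in the relative interior of F for every edge C: any three of these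
   conditions are met by the centroid of the three points.  Pushing every p_C slightly
   outwards from c, to z_C = p_C + t (p_C - c), gives points of aff F outside F whose
   pairwise midpoints and whose "reflections" (3c - z_C)/2 still lie in F.

   A proper face of the unit ball lies on the unit sphere, and the points of
   its affine hull outside it lie outside the ball.  Hence {z_C} together with -3c is an
   M-set: midpoints of two z's lie in F, the midpoint of -3c and z_C is -(3c - z_C)/2, and
   all points have norm > 1. *)

section \<open>Norms and the unit ball\<close>

lemma is_normD:
  fixes N :: "'a::real_vector \<Rightarrow> real"
  assumes "is_norm N"
  shows "N (c *\<^sub>R x) = \<bar>c\<bar> * N x" and "N (x + y) \<le> N x + N y"
    and "N 0 = 0" and "N (- x) = N x"
proof -
  show hom: "N (c *\<^sub>R x) = \<bar>c\<bar> * N x" for c x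
    using assms by (simp add: is_norm_def)
  show "N (x + y) \<le> N x + N y"
    using assms by (simp add: is_norm_def)
  show "N 0 = 0"
    using assms by (simp add: is_norm_def)
  show "N (- x) = N x"
    using hom[of "-1" x] by simp
qed

text \<open>A norm is a convex function; this yields convexity of the unit ball and, in finite
  dimension, continuity of the norm.\<close>

lemma is_norm_convex_on:
  assumes "is_norm N"
  shows "convex_on UNIV N"
proof (rule convex_onI)
  fix t :: real and x y
  assume "0 < t" "t < 1"
  then show "N ((1 - t) *\<^sub>R x + t *\<^sub>R y) \<le> (1 - t) * N x + t * N y"
    using is_normD(2)[OF assms, of "(1 - t) *\<^sub>R x" "t *\<^sub>R y"] is_normD(1)[OF assms]
    by simp
qed simp

lemma convex_unit_ball_N:
  assumes "is_norm N"
  shows "convex (unit_ball_N N)"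
  unfolding convex_alt unit_ball_N_def
proof (intro ballI allI impI, simp)
  fix x y and u :: real
  assume "N x \<le> 1" "N y \<le> 1" "0 \<le> u \<and> u \<le> 1"
  then have "N ((1 - u) *\<^sub>R x + u *\<^sub>R y) \<le> (1 - u) * N x + u * N y"
    using is_norm_convex_on[OF assms] by (intro convex_onD) auto
  also have "\<dots> \<le> (1 - u) * 1 + u * 1"
    using \<open>N x \<le> 1\<close> \<open>N y \<le> 1\<close> \<open>0 \<le> u \<and> u \<le> 1\<close> by (intro add_mono mult_left_mono) auto
  finally show "N ((1 - u) *\<^sub>R x + u *\<^sub>R y) \<le> 1" by simp
qed

text \<open>The open unit ball lies in the interior of the closed one (continuity of N).\<close>

lemma unit_ball_N_interior:
  fixes N :: "'a::euclidean_space \<Rightarrow> real"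
  assumes "is_norm N" "N x < 1"
  shows "x \<in> interior (unit_ball_N N)"
proof (rule interiorI)
  have "continuous_on UNIV N"
    by (rule convex_on_continuous[OF open_UNIV is_norm_convex_on[OF assms(1)]])
  then show "open {y. N y < 1}"
    by (simp add: open_Collect_less continuous_on_const)
  show "{y. N y < 1} \<subseteq> unit_ball_N N"
    by (auto simp: unit_ball_N_def)
qed (use assms in simp)

lemma aff_dim_unit_ball_N:
  fixes N :: "'a::euclidean_space \<Rightarrow> real"
  assumes "is_norm N"
  shows "aff_dim (unit_ball_N N) = DIM('a)"
proof (rule aff_dim_nonempty_interior)
  show "interior (unit_ball_N N) \<noteq> {}"
    using unit_ball_N_interior[OF assms, of 0] is_normD(3)[OF assms] by auto
qed

lemma proper_face_unit_ball:
  fixes N :: "'a::euclidean_space \<Rightarrow> real"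
  assumes "is_norm N" and F: "F face_of unit_ball_N N" "F \<noteq> unit_ball_N N"
  shows "\<And>x. x \<in> F \<Longrightarrow> N x = 1"
    and "\<And>x. x \<in> affine hull F - F \<Longrightarrow> N x > 1"
    and "0 \<notin> affine hull F"
proof -
  have FB: "F \<subseteq> unit_ball_N N"
    using F(1) by (rule face_of_imp_subset)
  show one: "N x = 1" if "x \<in> F" for x
  proof (rule ccontr)
    assume "N x \<noteq> 1"
    with FB that have "x \<in> interior (unit_ball_N N)"
      by (intro unit_ball_N_interior[OF assms(1)]) (auto simp: unit_ball_N_def)
    then show False
      using face_of_disjoint_interior[OF F] that by blast
  qed
  have hull: "affine hull F \<inter> unit_ball_N N = F"
    using face_of_imp_eq_affine_Int[OF convex_unit_ball_N[OF assms(1)] F(1)] by blast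
  show "N x > 1" if "x \<in> affine hull F - F" for x
  proof -
    have "x \<notin> unit_ball_N N"
      using hull that by blast
    then show ?thesis by (simp add: unit_ball_N_def)
  qed
  show "0 \<notin> affine hull F"
  proof
    assume "0 \<in> affine hull F"
    moreover have "0 \<in> unit_ball_N N"
      using is_normD(3)[OF assms(1)] by (simp add: unit_ball_N_def)
    ultimately have "0 \<in> F"
      using hull by blast
    then show False
      using one[of 0] is_normD(3)[OF assms(1)] by simp
  qed
qed

lemma affine_scaled_point:
  fixes x :: "'a::real_vector"
  assumes "affine A" "0 \<notin> A" "x \<in> A" "a *\<^sub>R x \<in> A"
  shows "a = 1"
proof (rule ccontr)
  assume "a \<noteq> 1"
  define u where "u = a / (a - 1)"
  have "u *\<^sub>R x + (1 - u) *\<^sub>R (a *\<^sub>R x) \<in> A"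
    using mem_affine[OF assms(1) assms(3,4)] by simp
  moreover have "u + (1 - u) * a = 0"
    using \<open>a \<noteq> 1\<close> by (simp add: u_def field_simps)
  then have "u *\<^sub>R x + (1 - u) *\<^sub>R (a *\<^sub>R x) = 0"
    by (metis scaleR_add_left scaleR_scaleR scaleR_zero_left)
  ultimately show False
    using assms(2) by simp
qed

lemma m_num_lower_bound:
  assumes "M_set N S" "finite S"
  shows "enat (card S) \<le> m_num N"
  unfolding m_num_def by (rule SUP_upper) (use assms in auto)

text \<open>Indeed the midpoint of -3c and z is
  the negative of (3c - z)/2.\<close>

lemma M_set_insert_antipode:
  fixes N :: "'a::real_vector \<Rightarrow> real"
  assumes "is_norm N" and "N c = 1"
    and out: "\<And>z. z \<in> Z \<Longrightarrow> N z > 1"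
    and refl: "\<And>z. z \<in> Z \<Longrightarrow> N ((3 *\<^sub>R c - z) /\<^sub>R 2) = 1"
    and mid: "\<And>z z'. z \<in> Z \<Longrightarrow> z' \<in> Z \<Longrightarrow> z \<noteq> z' \<Longrightarrow> N (midpoint z z') = 1"
  shows "M_set N (insert ((-3) *\<^sub>R c) Z)"
  unfolding M_set_def
proof (intro conjI ballI)
  have mid_antipode: "N (midpoint ((-3) *\<^sub>R c) z) = 1" if "z \<in> Z" for z
  proof -
    have "midpoint ((-3) *\<^sub>R c) z = - ((3 *\<^sub>R c - z) /\<^sub>R 2)"
      by (simp add: midpoint_def algebra_simps)
    then show ?thesis
      using refl[OF that] is_normD(4)[OF assms(1)] by simp
  qed
  fix m assume "m \<in> midpoint_set (insert ((-3) *\<^sub>R c) Z)"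
  then obtain x y where m: "m = midpoint x y" and xy: "x \<noteq> y"
    and x: "x = (-3) *\<^sub>R c \<or> x \<in> Z" and y: "y = (-3) *\<^sub>R c \<or> y \<in> Z"
    by (auto simp: midpoint_set_def midpoint_def)
  from x y show "N m = 1"
    using mid_antipode[of x] mid_antipode[of y] mid[of x y] xy by (auto simp: m midpoint_sym)
next
  fix x assume "x \<in> insert ((-3) *\<^sub>R c) Z"
  moreover have "N ((-3) *\<^sub>R c) = 3"
    using is_normD(1)[OF assms(1), of "-3" c] assms(2) by simp
  ultimately show "N x > 1"
    using out by auto
qed

section \<open>Helly's theorem inside an affine set\<close>

lemma Radon_common_point:
  fixes X :: "'i \<Rightarrow> 'a::euclidean_space"
  assumes "finite I" "affine_dependent (X ` I)"
    and convex: "\<And>j. j \<in> I \<Longrightarrow> convex (U j)"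
    and X: "\<And>i j. i \<in> I \<Longrightarrow> j \<in> I \<Longrightarrow> X i \<noteq> X j \<Longrightarrow> X i \<in> U j"
  shows "(\<Inter>j\<in>I. U j) \<noteq> {}"
proof -
  obtain M P where MP: "M \<inter> P = {}" "M \<union> P = X ` I" "convex hull M \<inter> convex hull P \<noteq> {}"
    using Radon_partition[OF finite_imageI[OF assms(1)] assms(2)] by meson
  then obtain y where y: "y \<in> convex hull M" "y \<in> convex hull P"
    by blast
  have hull_in: "convex hull Q \<subseteq> U j" if Q: "Q \<subseteq> X ` I" "X j \<notin> Q" and "j \<in> I" for Q j
  proof (rule hull_minimal)
    show "Q \<subseteq> U j"
    proof
      fix x assume "x \<in> Q"
      then obtain i where i: "i \<in> I" "x = X i"
        using Q(1) by blast
      have "x \<noteq> X j"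
        using Q(2) \<open>x \<in> Q\<close> by blast
      then show "x \<in> U j"
        using X[OF i(1) \<open>j \<in> I\<close>] i(2) by simp
    qed
    show "convex (U j)"
      using convex \<open>j \<in> I\<close> .
  qed
  have "y \<in> U j" if "j \<in> I" for j
  proof (cases "X j \<in> M")
    case True
    then show ?thesis
      using MP that y(2) hull_in[of P j] by blast
  next
    case False
    then show ?thesis
      using MP that y(1) hull_in[of M j] by blast
  qed
  then show ?thesis by blast
qed

lemma affine_dependent_of_card:
  fixes S :: "'a::euclidean_space set"
  assumes "finite S" "S \<subseteq> A" "aff_dim A + 1 < int (card S)"
  shows "affine_dependent S"
proof (rule ccontr)
  assume "\<not> affine_dependent S"
  then have "aff_dim S = int (card S) - 1"
    by (simp add: affine_independent_iff_card)
  moreover have "aff_dim S \<le> aff_dim A"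
    using assms(2) by (rule aff_dim_subset)
  ultimately show False
    using assms(3) by linarith
qed

lemma Helly_affine:
  fixes U :: "'i \<Rightarrow> 'a::euclidean_space set"
  assumes "finite I" "Suc d \<le> card I" "aff_dim A \<le> int d"
    and "\<And>i. i \<in> I \<Longrightarrow> convex (U i) \<and> U i \<subseteq> A"
    and "\<And>J. J \<subseteq> I \<Longrightarrow> card J = Suc d \<Longrightarrow> (\<Inter>i\<in>J. U i) \<noteq> {}"
  shows "(\<Inter>i\<in>I. U i) \<noteq> {}"
  using assms
proof (induction "card I" arbitrary: I rule: less_induct)
  case less
  show ?case
  proof (cases "card I = Suc d")
    case True
    then show ?thesis using less.prems(5) by blast
  next
    case False
    have "(\<Inter>j\<in>I - {i}. U j) \<noteq> {}" if "i \<in> I" for i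
    proof (rule less.hyps)
      show "card (I - {i}) < card I"
        using less.prems(1) that by (rule card_Diff1_less)
      show "Suc d \<le> card (I - {i})"
        using that less.prems(1,2) False by simp
      show "(\<Inter>i\<in>J. U i) \<noteq> {}" if "J \<subseteq> I - {i}" "card J = Suc d" for J
        using that less.prems(5) by blast
    qed (use less.prems in auto)
    then have "\<forall>i\<in>I. \<exists>x. x \<in> (\<Inter>j\<in>I - {i}. U j)"
      by blast
    then obtain X where "\<And>i. i \<in> I \<Longrightarrow> X i \<in> (\<Inter>j\<in>I - {i}. U j)"
      by metis
    then have X: "\<And>i j. i \<in> I \<Longrightarrow> j \<in> I \<Longrightarrow> j \<noteq> i \<Longrightarrow> X i \<in> U j"
      by blast
    show ?thesis
    proof (cases "inj_on X I")
      case False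
      then obtain i i' where "i \<in> I" "i' \<in> I" "i \<noteq> i'" "X i = X i'"
        by (auto simp: inj_on_def)
      then have "X i \<in> (\<Inter>j\<in>I. U j)"
        using X by (metis INT_I)
      then show ?thesis by blast
    next
      case True
      have "X ` I \<subseteq> A"
      proof
        fix x assume "x \<in> X ` I"
        then obtain i where i: "i \<in> I" "x = X i" by blast
        have "card (I - {i}) \<noteq> 0"
          using i less.prems(1,2) False by simp
        then obtain j where "j \<in> I" "j \<noteq> i"
          by (metis Diff_eq_empty_iff card.empty insertCI subsetI)
        then show "x \<in> A"
          using X i less.prems(4) by blast
      qed
      have "affine_dependent (X ` I)"
      proof (rule affine_dependent_of_card)
        show "aff_dim A + 1 < int (card (X ` I))"
          using less.prems(2,3) False card_image[OF True] by linarith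
      qed (use less.prems(1) \<open>X ` I \<subseteq> A\<close> in auto)
      then show ?thesis
        using less.prems(1,4) X by (intro Radon_common_point) auto
    qed
  qed
qed

section \<open>Vertices and edges of a polygon\<close>

lemma card_extreme_points_in_collinear:
  fixes C :: "'a::euclidean_space set"
  assumes "collinear C" "C \<subseteq> S"
  shows "card {v \<in> C. v extreme_point_of S} \<le> 2"
proof (rule ccontr)
  define V where "V = {v \<in> C. v extreme_point_of S}"
  have not_between: False
    if "a \<in> V" "b \<in> V" "w \<in> V" "w \<noteq> a" "w \<noteq> b" "between (a, b) w" for a b w
  proof -
    have "w \<in> open_segment a b"
      using that by (auto simp: between_mem_segment open_segment_def)
    then show False
      using that assms(2) by (auto simp: V_def extreme_point_of_def)
  qed
  assume "\<not> card {v \<in> C. v extreme_point_of S} \<le> 2"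
  then obtain T where "T \<subseteq> V" "card T = 3"
    by (metis V_def not_less_eq_eq numeral_2_eq_2 numeral_3_eq_3 obtain_subset_with_card_n)
  then obtain x y z where xyz: "{x, y, z} \<subseteq> V" "x \<noteq> y" "y \<noteq> z" "x \<noteq> z"
    by (auto simp: card_3_iff)
  have "collinear {x, y, z}"
    using xyz(1) by (intro collinear_subset[OF assms(1)]) (auto simp: V_def)
  then show False
    unfolding collinear_between_cases
    using not_between xyz by blast
qed

text \<open>In a polyhedron of dimension at least 2 every vertex lies on two facets, because a
  vertex is the intersection of the facets containing it.\<close>

lemma extreme_point_in_two_facets:
  fixes S :: "'a::euclidean_space set"
  assumes "polyhedron S" "aff_dim S \<ge> 2" "v extreme_point_of S"
  shows "card {C. C facet_of S \<and> v \<in> C} \<ge> 2"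
proof (rule ccontr)
  define Cs where "Cs = {C. C facet_of S \<and> v \<in> C}"
  have "{v} \<noteq> S"
    using assms(2) by auto
  moreover have "{v} face_of S"
    using assms(3) by (simp add: face_of_singleton)
  ultimately have v_eq: "{v} = \<Inter>Cs"
    using face_of_polyhedron[OF assms(1), of "{v}"] by (simp add: Cs_def)
  have "finite Cs"
    using finite_polyhedron_facets[OF assms(1)] by (simp add: Cs_def)
  assume "\<not> card {C. C facet_of S \<and> v \<in> C} \<ge> 2"
  then have "card Cs = 0 \<or> card Cs = 1"
    unfolding Cs_def by linarith
  then show False
  proof
    assume "card Cs = 0"
    then have "{v} = UNIV"
      using v_eq \<open>finite Cs\<close> by simp
    then show False
      by (metis UNIV_I insert_not_empty not_open_singleton open_UNIV singleton_iff)
  next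
    assume "card Cs = 1"
    then obtain C where "Cs = {C}"
      by (auto simp: card_1_singleton_iff)
    then have "C facet_of S" "C = {v}"
      using v_eq by (auto simp: Cs_def)
    then show False
      using assms(2) by (simp add: facet_of_def)
  qed
qed

text \<open>Double counting of vertex-edge incidences: a polygon has at least as many edges as
  vertices.\<close>

lemma card_extreme_points_le_card_facets:
  fixes S :: "'a::euclidean_space set"
  assumes "polyhedron S" "aff_dim S = 2"
  shows "card {v. v extreme_point_of S} \<le> card {C. C facet_of S}"
proof -
  define V where "V = {v. v extreme_point_of S}"
  define Fs where "Fs = {C. C facet_of S}"
  have fin: "finite V" "finite Fs"
    unfolding V_def Fs_def
    by (simp_all add: assms(1) finite_polyhedron_extreme_points finite_polyhedron_facets)
  have "2 * card V = (\<Sum>v\<in>V. 2)"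
    by simp
  also have "\<dots> \<le> (\<Sum>v\<in>V. card {C\<in>Fs. v \<in> C})"
    using extreme_point_in_two_facets[OF assms(1)] assms(2)
    by (intro sum_mono) (auto simp: V_def Fs_def)
  also have "\<dots> = (\<Sum>v\<in>V. \<Sum>C\<in>Fs. if v \<in> C then 1 else 0)"
    using fin by (simp add: sum.If_cases Int_def)
  also have "\<dots> = (\<Sum>C\<in>Fs. \<Sum>v\<in>V. if v \<in> C then 1 else 0)"
    by (rule sum.swap)
  also have "\<dots> = (\<Sum>C\<in>Fs. card {v\<in>V. v \<in> C})"
    using fin by (simp add: sum.If_cases Int_def)
  also have "\<dots> \<le> (\<Sum>C\<in>Fs. 2)"
  proof (intro sum_mono)
    fix C assume "C \<in> Fs"
    then have "collinear C" "C \<subseteq> S"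
      using assms(2) by (auto simp: Fs_def facet_of_def collinear_aff_dim dest: face_of_imp_subset)
    then show "card {v\<in>V. v \<in> C} \<le> 2"
      using card_extreme_points_in_collinear by (simp add: V_def conj_commute)
  qed
  also have "\<dots> = 2 * card Fs"
    by simp
  finally show ?thesis
    by (simp add: V_def Fs_def)
qed

lemma aff_dim_polytope_le_card_extreme_points:
  fixes S :: "'a::euclidean_space set"
  assumes "polytope S"
  shows "aff_dim S \<le> int (card {v. v extreme_point_of S}) - 1"
proof -
  have "S = convex hull {v. v extreme_point_of S}"
    using Krein_Milman_Minkowski polytope_imp_compact polytope_imp_convex assms by blast
  then have "aff_dim S = aff_dim {v. v extreme_point_of S}"
    by (metis aff_dim_convex_hull)
  then show ?thesis
    using aff_dim_le_card finite_polyhedron_extreme_points polytope_imp_polyhedron assms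
    by metis
qed

text \<open>Facets all have the same dimension, so one facet cannot properly contain another.\<close>

lemma facet_of_subset_eq:
  assumes "C facet_of S" "E facet_of S" "C \<subseteq> E"
  shows "C = E"
proof (rule ccontr)
  assume "C \<noteq> E"
  have "C face_of E"
    using assms by (meson face_of_subset facet_of_imp_face_of facet_of_imp_subset)
  then have "aff_dim C < aff_dim E"
    using \<open>C \<noteq> E\<close> assms(2) by (intro face_of_aff_dim_lt) (auto dest: facet_of_imp_face_of face_of_imp_convex)
  then show False
    using assms(1,2) by (simp add: facet_of_def)
qed

text \<open>The midpoint of relative interior points of two distinct facets lies in the relative
  interior of the polyhedron: a facet containing it would contain both facets.\<close>

lemma midpoint_facets_rel_interior:
  fixes S :: "'a::euclidean_space set"
  assumes "polyhedron S" and C: "C facet_of S" and D: "D facet_of S" and "C \<noteq> D"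
    and p: "p \<in> rel_interior C" and q: "q \<in> rel_interior D"
  shows "midpoint p q \<in> rel_interior S"
proof (rule ccontr)
  have pS: "p \<in> S" and qS: "q \<in> S"
    using p q C D rel_interior_subset by (auto dest!: facet_of_imp_subset)
  have "p \<noteq> q"
    using face_of_eq[OF facet_of_imp_face_of[OF C] facet_of_imp_face_of[OF D]] p q \<open>C \<noteq> D\<close>
    by blast
  have "midpoint p q \<in> S"
    using pS qS polyhedron_imp_convex[OF assms(1)]
    by (meson convex_contains_segment midpoint_in_closed_segment subsetD)
  moreover assume "midpoint p q \<notin> rel_interior S"
  ultimately obtain E where E: "E facet_of S" "midpoint p q \<in> E"
    using rel_interior_of_polyhedron[OF assms(1)] by blast
  have "midpoint p q \<in> open_segment p q"
    using \<open>p \<noteq> q\<close> by simp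
  then have "p \<in> E \<and> q \<in> E"
    using face_ofD[OF facet_of_imp_face_of[OF E(1)] _ pS qS] E(2) by blast
  then have "C \<subseteq> E" "D \<subseteq> E"
    using subset_of_face_of[OF facet_of_imp_face_of[OF E(1)]] facet_of_imp_subset C D p q
    by blast+
  then show False
    using facet_of_subset_eq C D E(1) \<open>C \<noteq> D\<close> by metis
qed

lemma facet_points:
  fixes S :: "'a::euclidean_space set"
  assumes "polyhedron S"
  obtains P where "finite P" "card P = card {C. C facet_of S}" "P \<subseteq> S - rel_interior S"
    "\<And>q q'. q \<in> P \<Longrightarrow> q' \<in> P \<Longrightarrow> q \<noteq> q' \<Longrightarrow> midpoint q q' \<in> rel_interior S"
proof -
  define Fs where "Fs = {C. C facet_of S}"
  have facet: "C facet_of S" if "C \<in> Fs" for C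
    using that by (simp add: Fs_def)
  have "\<exists>x. x \<in> rel_interior C" if "C \<in> Fs" for C
    using that rel_interior_eq_empty[of C] by (auto simp: Fs_def facet_of_def dest: face_of_imp_convex)
  then obtain p where p: "\<And>C. C \<in> Fs \<Longrightarrow> p C \<in> rel_interior C"
    by metis
  have "inj_on p Fs"
  proof (rule inj_onI)
    fix C D assume "C \<in> Fs" "D \<in> Fs" "p C = p D"
    then have "rel_interior C \<inter> rel_interior D \<noteq> {}"
      using p by (metis IntI empty_iff)
    then show "C = D"
      using face_of_eq facet_of_imp_face_of facet \<open>C \<in> Fs\<close> \<open>D \<in> Fs\<close> by metis
  qed
  show ?thesis
  proof (rule that[of "p ` Fs"])
    show "finite (p ` Fs)"
      unfolding Fs_def using finite_polyhedron_facets[OF assms] by simp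
    show "card (p ` Fs) = card {C. C facet_of S}"
      using card_image[OF \<open>inj_on p Fs\<close>] by (simp add: Fs_def)
    show "p ` Fs \<subseteq> S - rel_interior S"
    proof
      fix q assume "q \<in> p ` Fs"
      then obtain C where C: "C \<in> Fs" "q = p C"
        by blast
      have "q \<in> C"
        using p[OF C(1)] rel_interior_subset C(2) by blast
      moreover have "C \<noteq> S"
        using facet[OF C(1)] facet_of_irrefl by blast
      ultimately show "q \<in> S - rel_interior S"
        using face_of_subset_rel_boundary[OF facet_of_imp_face_of[OF facet[OF C(1)]]] by blast
    qed
    show "midpoint q q' \<in> rel_interior S"
      if qq': "q \<in> p ` Fs" "q' \<in> p ` Fs" "q \<noteq> q'" for q q'
    proof -
      obtain C D where "C \<in> Fs" "D \<in> Fs" "q = p C" "q' = p D"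
        using qq'(1,2) by blast
      then show ?thesis
        using midpoint_facets_rel_interior[OF assms facet facet _ p p] qq'(3) by blast
    qed
  qed
qed

text \<open>The centres c with (3c - p)/2 in the relative interior of a convex set S form the
  image of that relative interior under the homothety y \<mapsto> p/3 + 2y/3; in particular they
  form a convex subset of the affine hull of S.\<close>

lemma reflection_centres:
  fixes S :: "'a::euclidean_space set"
  assumes "convex S" "p \<in> affine hull S"
  shows "convex {c. (3 *\<^sub>R c - p) /\<^sub>R 2 \<in> rel_interior S}"
    and "{c. (3 *\<^sub>R c - p) /\<^sub>R 2 \<in> rel_interior S} \<subseteq> affine hull S"
proof -
  define h where "h y = (1/3) *\<^sub>R p + (2/3) *\<^sub>R y" for y
  have "c = h y \<longleftrightarrow> y = (3 *\<^sub>R c - p) /\<^sub>R 2" for c y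
  proof
    show "y = (3 *\<^sub>R c - p) /\<^sub>R 2" if "c = h y"
      using that by (simp add: h_def algebra_simps)
    show "c = h y" if "y = (3 *\<^sub>R c - p) /\<^sub>R 2"
      unfolding that h_def by (simp add: algebra_simps flip: scaleR_add_left)
  qed
  then have image: "{c. (3 *\<^sub>R c - p) /\<^sub>R 2 \<in> rel_interior S} = h ` rel_interior S"
    by (auto simp: image_iff) metis
  show "convex {c. (3 *\<^sub>R c - p) /\<^sub>R 2 \<in> rel_interior S}"
    unfolding image h_def by (rule convex_affinity[OF convex_rel_interior[OF assms(1)]])
  have "h y \<in> affine hull S" if "y \<in> rel_interior S" for y
  proof -
    have "y \<in> affine hull S"
      using that rel_interior_subset by (intro hull_inc) blast
    then show ?thesis
      using mem_affine[OF affine_affine_hull assms(2)] by (simp add: h_def)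
  qed
  then show "{c. (3 *\<^sub>R c - p) /\<^sub>R 2 \<in> rel_interior S} \<subseteq> affine hull S"
    unfolding image by blast
qed

text \<open>If the pairwise midpoints of a set P of at least three points of a planar convex set
  S are relative interior points, then some c has all (3c - p)/2 in the relative interior:
  by Helly, it suffices to treat three points, and there the centroid works since
  (3c - a)/2 is then the midpoint of the other two.\<close>

lemma reflection_centre_exists:
  fixes S :: "'a::euclidean_space set"
  assumes "convex S" "aff_dim S = 2" "finite P" "card P \<ge> 3" "P \<subseteq> S"
    and mid: "\<And>p q. p \<in> P \<Longrightarrow> q \<in> P \<Longrightarrow> p \<noteq> q \<Longrightarrow> midpoint p q \<in> rel_interior S"
  obtains c where "\<And>p. p \<in> P \<Longrightarrow> (3 *\<^sub>R c - p) /\<^sub>R 2 \<in> rel_interior S"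
proof -
  define U where "U p = {c. (3 *\<^sub>R c - p) /\<^sub>R 2 \<in> rel_interior S}" for p
  have centroid: "(1/3) *\<^sub>R (a + b + e) \<in> U a"
    if "a \<in> P" "b \<in> P" "e \<in> P" "b \<noteq> e" for a b e
  proof -
    have "(3 *\<^sub>R ((1/3) *\<^sub>R (a + b + e)) - a) /\<^sub>R 2 = midpoint b e"
      by (simp add: midpoint_def algebra_simps)
    then show ?thesis
      using mid[OF that(2-4)] by (simp add: U_def)
  qed
  have "(\<Inter>p\<in>P. U p) \<noteq> {}"
  proof (rule Helly_affine[where d = 2 and A = "affine hull S"])
    show "convex (U p) \<and> U p \<subseteq> affine hull S" if "p \<in> P" for p
    proof -
      have "p \<in> affine hull S"
        using that assms(5) by (intro hull_inc) blast
      then show ?thesis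
        unfolding U_def using reflection_centres[OF assms(1)] by blast
    qed
    show "(\<Inter>p\<in>J. U p) \<noteq> {}" if "J \<subseteq> P" "card J = Suc 2" for J
    proof -
      obtain a b e where J: "J = {a, b, e}" "a \<noteq> b" "b \<noteq> e" "a \<noteq> e"
        using \<open>card J = Suc 2\<close> by (auto simp: card_3_iff numeral_3_eq_3[symmetric])
      then have "a \<in> P" "b \<in> P" "e \<in> P"
        using \<open>J \<subseteq> P\<close> by auto
      then have "(1/3) *\<^sub>R (a + b + e) \<in> U a \<inter> U b \<inter> U e"
        using centroid[of a b e] centroid[of b a e] centroid[of e a b] J
        by (simp add: ac_simps)
      then show ?thesis
        using J(1) by blast
    qed
  qed (use assms in auto)
  then show ?thesis
    using that by (auto simp: U_def)
qed

text \<open>Such a centre lies in the relative interior: it divides the segment from p to the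
  relative interior point (3c - p)/2 in the ratio 2 : 1.\<close>

lemma centre_in_rel_interior:
  fixes S :: "'a::euclidean_space set"
  assumes "convex S" "p \<in> S" "(3 *\<^sub>R c - p) /\<^sub>R 2 \<in> rel_interior S"
  shows "c \<in> rel_interior S"
proof -
  have "p - (2/3) *\<^sub>R (p - (3 *\<^sub>R c - p) /\<^sub>R 2) \<in> rel_interior S"
    using assms closure_subset by (intro rel_interior_closure_convex_shrink) auto
  moreover have "p - (2/3) *\<^sub>R (p - (3 *\<^sub>R c - p) /\<^sub>R 2) = c"
    by (simp add: algebra_simps flip: scaleR_add_left)
  ultimately show ?thesis by simp
qed

lemma eventually_mem_along_direction:
  fixes S :: "'a::euclidean_space set"
  assumes "y \<in> rel_interior S" "y + d \<in> affine hull S"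
  shows "\<forall>\<^sub>F t in at_right 0. y + t *\<^sub>R d \<in> S"
proof -
  obtain e where "e > 0" and e: "ball y e \<inter> affine hull S \<subseteq> S"
    using assms(1) by (auto simp: mem_rel_interior_ball)
  have "((\<lambda>t. y + t *\<^sub>R d) \<longlongrightarrow> y + 0 *\<^sub>R d) (at_right 0)"
    by (intro tendsto_intros)
  then have "\<forall>\<^sub>F t in at_right 0. y + t *\<^sub>R d \<in> ball y e"
    using \<open>e > 0\<close> by (intro topological_tendstoD) auto
  moreover have "y + t *\<^sub>R d \<in> affine hull S" for t
    using mem_affine_3_minus[OF affine_affine_hull _ assms(2), of y y t] assms(1)
    by (simp add: hull_inc rel_interior_subset[THEN subsetD])
  ultimately show ?thesis
    using e by (auto elim!: eventually_mono)
qed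

lemma push_out_of_convex:
  fixes S :: "'a::euclidean_space set"
  assumes "convex S" "c \<in> rel_interior S" "p \<notin> rel_interior S" "t > 0"
  shows "p + t *\<^sub>R (p - c) \<notin> S"
proof
  define z where "z = p + t *\<^sub>R (p - c)"
  define e where "e = t / (1 + t)"
  assume "z \<in> S"
  then have "z - e *\<^sub>R (z - c) \<in> rel_interior S"
    using assms closure_subset by (intro rel_interior_closure_convex_shrink) (auto simp: e_def)
  moreover have "z - e *\<^sub>R (z - c) = p + (t - e * (1 + t)) *\<^sub>R (p - c)"
    by (simp add: z_def algebra_simps)
  moreover have "t - e * (1 + t) = 0"
    using \<open>t > 0\<close> by (simp add: e_def)
  ultimately show False
    using assms(3) by simp
qed

lemma small_outward_step:
  fixes S :: "'a::euclidean_space set"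
  assumes "finite P" "P \<subseteq> S"
    and mid: "\<And>p q. p \<in> P \<Longrightarrow> q \<in> P \<Longrightarrow> p \<noteq> q \<Longrightarrow> midpoint p q \<in> rel_interior S"
    and c: "c \<in> affine hull S"
    and refl: "\<And>p. p \<in> P \<Longrightarrow> (3 *\<^sub>R c - p) /\<^sub>R 2 \<in> rel_interior S"
  obtains t :: real where "t > 0"
    "\<And>p. p \<in> P \<Longrightarrow> (3 *\<^sub>R c - p) /\<^sub>R 2 + t *\<^sub>R ((c - p) /\<^sub>R 2) \<in> S"
    "\<And>p q. p \<in> P \<Longrightarrow> q \<in> P \<Longrightarrow> p \<noteq> q \<Longrightarrow> midpoint p q + t *\<^sub>R (midpoint p q - c) \<in> S"
proof -
  have aff: "affine (affine hull S)"
    by simp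
  have PA: "p \<in> affine hull S" if "p \<in> P" for p
    using that assms(2) by (intro hull_inc) blast
  have ev_refl: "\<forall>\<^sub>F t in at_right 0. \<forall>p\<in>P. (3 *\<^sub>R c - p) /\<^sub>R 2 + t *\<^sub>R ((c - p) /\<^sub>R 2) \<in> S"
  proof (intro eventually_ball_finite ballI assms(1) eventually_mem_along_direction refl)
    fix p assume "p \<in> P"
    have "(3 *\<^sub>R c - p) /\<^sub>R 2 + (c - p) /\<^sub>R 2 = 2 *\<^sub>R c - p"
      by (simp add: algebra_simps flip: scaleR_add_left)
    also have "\<dots> = c + 1 *\<^sub>R (c - p)"
      by (simp add: algebra_simps scaleR_2)
    finally show "(3 *\<^sub>R c - p) /\<^sub>R 2 + (c - p) /\<^sub>R 2 \<in> affine hull S"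
      using mem_affine_3_minus[OF aff c c PA[OF \<open>p \<in> P\<close>]] by metis
  qed
  have ev_mid: "\<forall>\<^sub>F t in at_right 0. \<forall>p\<in>P. \<forall>q\<in>P. p \<noteq> q \<longrightarrow>
      midpoint p q + t *\<^sub>R (midpoint p q - c) \<in> S"
  proof (intro eventually_ball_finite ballI assms(1))
    fix p q assume "p \<in> P" "q \<in> P"
    show "\<forall>\<^sub>F t in at_right 0. p \<noteq> q \<longrightarrow> midpoint p q + t *\<^sub>R (midpoint p q - c) \<in> S"
    proof (cases "p = q")
      case False
      have "midpoint p q + (midpoint p q - c) = p + 1 *\<^sub>R (q - c)"
        by (simp add: midpoint_def algebra_simps flip: scaleR_add_left)
      then have "midpoint p q + (midpoint p q - c) \<in> affine hull S"
        using mem_affine_3_minus[OF aff PA[OF \<open>p \<in> P\<close>] PA[OF \<open>q \<in> P\<close>] c] by metis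
      then have "\<forall>\<^sub>F t in at_right 0. midpoint p q + t *\<^sub>R (midpoint p q - c) \<in> S"
        by (rule eventually_mem_along_direction[OF mid[OF \<open>p \<in> P\<close> \<open>q \<in> P\<close> False]])
      then show ?thesis
        by (rule eventually_mono) simp
    qed simp
  qed
  have "\<exists>t::real. 0 < t \<and>
      (\<forall>p\<in>P. (3 *\<^sub>R c - p) /\<^sub>R 2 + t *\<^sub>R ((c - p) /\<^sub>R 2) \<in> S) \<and>
      (\<forall>p\<in>P. \<forall>q\<in>P. p \<noteq> q \<longrightarrow> midpoint p q + t *\<^sub>R (midpoint p q - c) \<in> S)"
    by (rule eventually_happens'[OF _ eventually_conj[OF eventually_at_right_less
          eventually_conj[OF ev_refl ev_mid]]]) simp
  then show ?thesis
    using that by blast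
qed

lemma outer_points_construction:
  fixes S :: "'a::euclidean_space set"
  assumes "convex S" "finite P" "P \<subseteq> S - rel_interior S"
    and mid: "\<And>p q. p \<in> P \<Longrightarrow> q \<in> P \<Longrightarrow> p \<noteq> q \<Longrightarrow> midpoint p q \<in> rel_interior S"
    and c: "c \<in> rel_interior S"
    and refl: "\<And>p. p \<in> P \<Longrightarrow> (3 *\<^sub>R c - p) /\<^sub>R 2 \<in> rel_interior S"
  obtains Z where "finite Z" "card Z = card P" "Z \<subseteq> affine hull S - S"
    "\<And>z. z \<in> Z \<Longrightarrow> (3 *\<^sub>R c - z) /\<^sub>R 2 \<in> S"
    "\<And>z z'. z \<in> Z \<Longrightarrow> z' \<in> Z \<Longrightarrow> z \<noteq> z' \<Longrightarrow> midpoint z z' \<in> S"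
proof -
  have cA: "c \<in> affine hull S"
    using c rel_interior_subset by (intro hull_inc) blast
  obtain t :: real where t: "t > 0"
    and t_refl: "\<And>p. p \<in> P \<Longrightarrow> (3 *\<^sub>R c - p) /\<^sub>R 2 + t *\<^sub>R ((c - p) /\<^sub>R 2) \<in> S"
    and t_mid: "\<And>p q. p \<in> P \<Longrightarrow> q \<in> P \<Longrightarrow> p \<noteq> q \<Longrightarrow> midpoint p q + t *\<^sub>R (midpoint p q - c) \<in> S"
    using small_outward_step[OF assms(2) _ mid cA refl] assms(3) by blast
  define push where "push p = p + t *\<^sub>R (p - c)" for p
  show ?thesis
  proof (rule that[of "push ` P"])
    have "inj_on push P"
    proof (rule inj_onI)
      fix p q assume "push p = push q"
      then have "(1 + t) *\<^sub>R (p - q) = 0"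
        by (simp add: push_def algebra_simps)
      then show "p = q"
        using t by simp
    qed
    then show "card (push ` P) = card P"
      by (rule card_image)
    show "finite (push ` P)"
      using assms(2) by simp
    have "p \<in> affine hull S" if "p \<in> P" for p
      using that assms(3) by (intro hull_inc) blast
    then show "push ` P \<subseteq> affine hull S - S"
      using push_out_of_convex[OF assms(1) c] mem_affine_3_minus[OF affine_affine_hull _ _ cA]
        assms(3) t
      by (auto simp: push_def)
    show "(3 *\<^sub>R c - z) /\<^sub>R 2 \<in> S" if z: "z \<in> push ` P" for z
    proof -
      obtain p where "p \<in> P" "z = push p"
        using z by blast
      moreover have "(3 *\<^sub>R c - push p) /\<^sub>R 2 = (3 *\<^sub>R c - p) /\<^sub>R 2 + t *\<^sub>R ((c - p) /\<^sub>R 2)"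
        by (simp add: push_def algebra_simps)
      ultimately show ?thesis
        using t_refl by simp
    qed
    show "midpoint z z' \<in> S" if zz': "z \<in> push ` P" "z' \<in> push ` P" "z \<noteq> z'" for z z'
    proof -
      obtain p q where "p \<in> P" "q \<in> P" "z = push p" "z' = push q"
        using zz'(1,2) by blast
      moreover have "midpoint (push p) (push q) = midpoint p q + t *\<^sub>R (midpoint p q - c)"
        by (simp add: push_def midpoint_def algebra_simps flip: scaleR_add_left)
      ultimately show ?thesis
        using t_mid zz'(3) by fastforce
    qed
  qed
qed

lemma polygon_outer_configuration:
  fixes F :: "'a::euclidean_space set"
  assumes "polytope F" "aff_dim F = 2"
  obtains c Z where "c \<in> F" "finite Z" "card Z \<ge> card {v. v extreme_point_of F}"
    "Z \<subseteq> affine hull F - F"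
    "\<And>z. z \<in> Z \<Longrightarrow> (3 *\<^sub>R c - z) /\<^sub>R 2 \<in> F"
    "\<And>z z'. z \<in> Z \<Longrightarrow> z' \<in> Z \<Longrightarrow> z \<noteq> z' \<Longrightarrow> midpoint z z' \<in> F"
proof -
  have poly: "polyhedron F" and cvx: "convex F"
    using assms(1) by (simp_all add: polytope_imp_polyhedron polytope_imp_convex)
  obtain P where "finite P" and card_P: "card P = card {C. C facet_of F}"
    and P_boundary: "P \<subseteq> F - rel_interior F"
    and mid: "\<And>q q'. q \<in> P \<Longrightarrow> q' \<in> P \<Longrightarrow> q \<noteq> q' \<Longrightarrow> midpoint q q' \<in> rel_interior F"
    using facet_points[OF poly] by blast
  have vertices: "card {v. v extreme_point_of F} \<le> card P"
    using card_extreme_points_le_card_facets[OF poly assms(2)] card_P by simp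
  moreover have "3 \<le> card {v. v extreme_point_of F}"
    using aff_dim_polytope_le_card_extreme_points[OF assms(1)] assms(2) by linarith
  ultimately have "3 \<le> card P"
    by simp
  then obtain c where c: "\<And>q. q \<in> P \<Longrightarrow> (3 *\<^sub>R c - q) /\<^sub>R 2 \<in> rel_interior F"
    using reflection_centre_exists[OF cvx assms(2) \<open>finite P\<close> _ _ mid] P_boundary by blast
  obtain q where "q \<in> P"
    using \<open>3 \<le> card P\<close> by fastforce
  then have c_rel: "c \<in> rel_interior F"
    using centre_in_rel_interior[OF cvx _ c] P_boundary by blast
  obtain Z where Z: "finite Z" "card Z = card P" "Z \<subseteq> affine hull F - F"
    "\<And>z. z \<in> Z \<Longrightarrow> (3 *\<^sub>R c - z) /\<^sub>R 2 \<in> F"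
    "\<And>z z'. z \<in> Z \<Longrightarrow> z' \<in> Z \<Longrightarrow> z \<noteq> z' \<Longrightarrow> midpoint z z' \<in> F"
    using outer_points_construction[OF cvx \<open>finite P\<close> P_boundary mid c_rel c] by blast
  show ?thesis
  proof (rule that[OF _ Z(1) _ Z(3-5)])
    show "c \<in> F"
      using c_rel rel_interior_subset by blast
    show "card {v. v extreme_point_of F} \<le> card Z"
      using vertices Z(2) by simp
  qed
qed

theorem lemma5:
  fixes N :: "real^3 \<Rightarrow> real" and F :: "(real^3) set" and n :: nat
  assumes "is_norm N"
    and "F face_of unit_ball_N N"
    and "is_ngon F n"
  shows "enat (n + 1) \<le> m_num N"
proof -
  have poly: "polytope F" "aff_dim F = 2" and n: "card {v. v extreme_point_of F} = n"
    using assms(3) by (auto simp: is_ngon_def)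
  have "F \<noteq> unit_ball_N N"
    using aff_dim_unit_ball_N[OF assms(1)] poly(2) by auto
  note face = proper_face_unit_ball[OF assms(1,2) this]
  obtain c Z where c: "c \<in> F" and "finite Z" "card Z \<ge> n" and Z: "Z \<subseteq> affine hull F - F"
    and refl: "\<And>z. z \<in> Z \<Longrightarrow> (3 *\<^sub>R c - z) /\<^sub>R 2 \<in> F"
    and mid: "\<And>z z'. z \<in> Z \<Longrightarrow> z' \<in> Z \<Longrightarrow> z \<noteq> z' \<Longrightarrow> midpoint z z' \<in> F"
    using polygon_outer_configuration[OF poly] n by metis
  have M: "M_set N (insert ((-3) *\<^sub>R c) Z)"
    using face(1)[OF c] face(2) Z face(1)[OF refl] face(1)[OF mid]
    by (intro M_set_insert_antipode[OF assms(1)]) auto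
  have "(-3) *\<^sub>R c \<notin> Z"
    using affine_scaled_point[OF affine_affine_hull face(3), of c "-3"] c Z hull_inc by force
  then have "card (insert ((-3) *\<^sub>R c) Z) = card Z + 1"
    using \<open>finite Z\<close> by simp
  then show ?thesis
    using m_num_lower_bound[OF M] \<open>finite Z\<close> \<open>card Z \<ge> n\<close>
    by (metis Suc_eq_plus1 enat_ord_simps(1) finite_insert not_less_eq_eq order_trans)
qed

end
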